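(* Let $n\ge1$ and let $\mathcal F$ be a collection of even-cardinality subsets of $[n]$ such that for every integer $r$ with $0\le r\le \lfloor n/2\rfloor$, the members of $\mathcal F$ of size $2r$ form the collection of bases of a sparse paving matroid with ground set $[n]$ and rank $2r$. Then $\mathcal F$ is the collection of feasible sets of a delta-matroid with ground set $[n]$.
   Context: A matroid is paving if it has no circuits of size strictly smaller than its rank, and sparse paving if both it and its dual are paving. A delta-matroid $(E,\mathcal F)$ consists of a finite ground set $E$ and a non-empty collection $\mathcal F$ of subsets of $E$ (the feasible sets) satisfying the symmetric exchange axiom: for all $X,Y\in\mathcal F$ and every $e\in X\triangle Y$ there exists $f\in X\triangle Y$ (possibly $f=e$) with $X\triangle\{e,f\}\in\mathcal F$. $[n]=\{1,\dots,n\}$. *)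

theory Defs
  imports Main
begin

definition matroid_bases :: "'a set \<Rightarrow> 'a set set \<Rightarrow> bool" where
  "matroid_bases E \<B> \<longleftrightarrow> finite E \<and> \<B> \<noteq> {} \<and> (\<forall>X\<in>\<B>. X \<subseteq> E) \<and>
     (\<forall>B1\<in>\<B>. \<forall>B2\<in>\<B>. \<forall>x\<in>B1 - B2. \<exists>y\<in>B2 - B1. insert y (B1 - {x}) \<in> \<B>)"

definition m_indep :: "'a set set \<Rightarrow> 'a set \<Rightarrow> bool" where
  "m_indep \<B> X \<longleftrightarrow> (\<exists>B\<in>\<B>. X \<subseteq> B)"

definition m_circuit :: "'a set \<Rightarrow> 'a set set \<Rightarrow> 'a set \<Rightarrow> bool" where
  "m_circuit E \<B> C \<longleftrightarrow> C \<subseteq> E \<and> \<not> m_indep \<B> C \<and> (\<forall>D. D \<subset> C \<longrightarrow> m_indep \<B> D)"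

text \<open>Rank of the matroid = common cardinality of its bases.\<close>
definition m_rank :: "'a set set \<Rightarrow> nat" where
  "m_rank \<B> = card (SOME B. B \<in> \<B>)"

definition dual_bases :: "'a set \<Rightarrow> 'a set set \<Rightarrow> 'a set set" where
  "dual_bases E \<B> = (\<lambda>B. E - B) ` \<B>"

definition paving :: "'a set \<Rightarrow> 'a set set \<Rightarrow> bool" where
  "paving E \<B> \<longleftrightarrow> matroid_bases E \<B> \<and> (\<forall>C. m_circuit E \<B> C \<longrightarrow> m_rank \<B> \<le> card C)"

definition sparse_paving :: "'a set \<Rightarrow> 'a set set \<Rightarrow> bool" where
  "sparse_paving E \<B> \<longleftrightarrow> paving E \<B> \<and> paving E (dual_bases E \<B>)"

definition symdiff :: "'a set \<Rightarrow> 'a set \<Rightarrow> 'a set" where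
  "symdiff X Y = (X - Y) \<union> (Y - X)"

definition delta_matroid :: "'a set \<Rightarrow> 'a set set \<Rightarrow> bool" where
  "delta_matroid E \<F> \<longleftrightarrow> finite E \<and> \<F> \<noteq> {} \<and> (\<forall>X\<in>\<F>. X \<subseteq> E) \<and>
     (\<forall>X\<in>\<F>. \<forall>Y\<in>\<F>. \<forall>e\<in>symdiff X Y. \<exists>f\<in>symdiff X Y. symdiff X {e, f} \<in> \<F>)"

end

theory Submission
  imports Defs
begin

text \<open>
  For a sparse paving matroid of rank \<open>k\<close>, every \<open>(k-1)\<close>-set lies in a basis (paving) and every
  \<open>(k+1)\<close>-set contains a basis (the dual is paving). Basis exchange then shows that of any two
  one-point extensions of a \<open>(k-1)\<close>-set, at least one is a basis. Hence the even family \<open>\<F>\<close> has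
  this property for every odd set \<open>S\<close>. Given \<open>X, Y \<in> \<F>\<close> and \<open>e \<in> X \<triangle> Y\<close>, put \<open>S = X \<triangle> {e}\<close>,
  which is odd, as is \<open>S \<triangle> Y\<close>. If two elements of \<open>S \<triangle> Y\<close> lie on the same side, flipping one of
  them in \<open>S\<close> lands in \<open>\<F>\<close>; otherwise \<open>S \<triangle> Y\<close> is a single element \<open>f\<close> and \<open>S \<triangle> {f} = Y\<close>.
\<close>

lemma m_rank_eq:
  assumes "\<B> \<noteq> {}" "\<forall>X\<in>\<B>. card X = k"
  shows "m_rank \<B> = k"
  using assms some_in_eq unfolding m_rank_def by metis

lemma dependent_contains_circuit:
  assumes "finite X" "X \<subseteq> E" "\<not> m_indep \<B> X"
  shows "\<exists>C\<subseteq>X. m_circuit E \<B> C"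
  using assms
proof (induction X rule: finite_psubset_induct)
  case (psubset X)
  show ?case
  proof (cases "\<exists>D\<subset>X. \<not> m_indep \<B> D")
    case True
    then obtain D where "D \<subset> X" "\<not> m_indep \<B> D" by blast
    with psubset.IH[of D] psubset.prems show ?thesis by blast
  next
    case False
    with psubset.prems have "m_circuit E \<B> X" unfolding m_circuit_def by blast
    then show ?thesis by blast
  qed
qed

lemma paving_indep_of_card_less:
  assumes "paving E \<B>" "\<forall>B\<in>\<B>. card B = k" "X \<subseteq> E" "card X < k"
  shows "m_indep \<B> X"
proof (rule ccontr)
  assume "\<not> m_indep \<B> X"
  have "finite E" "\<B> \<noteq> {}"
    using assms(1) unfolding paving_def matroid_bases_def by auto
  with assms(3) obtain C where "C \<subseteq> X" "m_circuit E \<B> C"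
    using dependent_contains_circuit \<open>\<not> m_indep \<B> X\<close> finite_subset by metis
  then have "k \<le> card C"
    using assms(1,2) m_rank_eq[OF \<open>\<B> \<noteq> {}\<close>] unfolding paving_def by metis
  moreover have "card C \<le> card X"
    using \<open>C \<subseteq> X\<close> \<open>finite E\<close> assms(3) card_mono finite_subset by metis
  ultimately show False using assms(4) by simp
qed

lemma paving_extend_to_basis:
  assumes "paving E \<B>" "\<forall>B\<in>\<B>. card B = k" "S \<subseteq> E" "card S + 1 = k"
  shows "\<exists>a. a \<notin> S \<and> insert a S \<in> \<B>"
proof -
  obtain B where B: "B \<in> \<B>" "S \<subseteq> B"
    using paving_indep_of_card_less[OF assms(1-3)] assms(4) unfolding m_indep_def by auto
  have "finite B"
    using assms(1) B(1) unfolding paving_def matroid_bases_def by (meson finite_subset)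
  then have "card (B - S) = 1"
    using B assms(2,4) by (simp add: card_Diff_subset finite_subset)
  then obtain a where a: "B - S = {a}" by (rule card_1_singletonE)
  then have "B = insert a S" using B(2) by auto
  with a B(1) show ?thesis by auto
qed

lemma sparse_paving_contains_basis:
  assumes "sparse_paving E \<B>" "\<forall>B\<in>\<B>. card B = k" "T \<subseteq> E" "card T = k + 1"
  shows "\<exists>a\<in>T. T - {a} \<in> \<B>"
proof -
  have "finite E" and sub: "\<forall>B\<in>\<B>. B \<subseteq> E" and dual: "paving E (dual_bases E \<B>)"
    using assms(1) unfolding sparse_paving_def paving_def matroid_bases_def by auto
  have "\<forall>B\<in>dual_bases E \<B>. card B = card E - k"
    unfolding dual_bases_def using assms(2) sub \<open>finite E\<close>
    by (auto simp: card_Diff_subset finite_subset)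
  moreover have "card (E - T) + 1 = card E - k"
    using assms(3,4) \<open>finite E\<close> card_mono[OF \<open>finite E\<close> assms(3)]
    by (simp add: card_Diff_subset finite_subset)
  ultimately obtain a where a: "a \<notin> E - T" "insert a (E - T) \<in> dual_bases E \<B>"
    using paving_extend_to_basis[OF dual] by blast
  then obtain B where B: "B \<in> \<B>" "insert a (E - T) = E - B"
    unfolding dual_bases_def by blast
  have "a \<in> T" using a B(2) by blast
  moreover have "B = T - {a}" using B(2) sub B(1) assms(3) by blast
  ultimately show ?thesis using B(1) by blast
qed

lemma sparse_paving_basis_among_two_extensions:
  assumes sp: "sparse_paving E \<B>" and card: "\<forall>B\<in>\<B>. card B = k"
    and S: "S \<subseteq> E" "card S + 1 = k"
    and ab: "a \<in> E - S" "b \<in> E - S" "a \<noteq> b"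
  shows "insert a S \<in> \<B> \<or> insert b S \<in> \<B>"
proof (rule ccontr)
  assume neither: "\<not> (insert a S \<in> \<B> \<or> insert b S \<in> \<B>)"
  have pav: "paving E \<B>" using sp unfolding sparse_paving_def by blast
  then have "finite E"
    and exch: "\<forall>B1\<in>\<B>. \<forall>B2\<in>\<B>. \<forall>x\<in>B1 - B2. \<exists>y\<in>B2 - B1. insert y (B1 - {x}) \<in> \<B>"
    unfolding paving_def matroid_bases_def by auto
  let ?T = "insert a (insert b S)"
  have "finite S" using S(1) \<open>finite E\<close> finite_subset by blast
  then have "card ?T = k + 1" using S(2) ab by simp
  moreover have "?T \<subseteq> E" using S(1) ab by blast
  ultimately obtain x where x: "x \<in> ?T" "?T - {x} \<in> \<B>"
    using sparse_paving_contains_basis[OF sp card] by blast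
  have "?T - {a} = insert b S" "?T - {b} = insert a S"
    using ab by auto
  with x neither have "x \<in> S" by (metis insertE)
  obtain c where c: "c \<notin> S" "insert c S \<in> \<B>"
    using paving_extend_to_basis[OF pav card S] by blast
  with neither have "c \<notin> ?T - {x}" by blast
  then have "c \<in> insert c S - (?T - {x})" by blast
  then obtain y where "y \<in> (?T - {x}) - insert c S" "insert y (insert c S - {c}) \<in> \<B>"
    using exch c(2) x(2) by blast
  moreover have "insert c S - {c} = S" using c(1) by simp
  ultimately have "insert a S \<in> \<B> \<or> insert b S \<in> \<B>" using \<open>x \<in> S\<close> by auto
  with neither show False by blast
qed

lemma card_symdiff:
  assumes "finite A" "finite B"
  shows "card (symdiff A B) + 2 * card (A \<inter> B) = card A + card B"
proof -
  have "card (symdiff A B) = card (A - B) + card (B - A)"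
    unfolding symdiff_def using assms by (simp add: card_Un_disjoint Diff_Int_distrib2)
  moreover have "card A = card (A - B) + card (A \<inter> B)" "card B = card (B - A) + card (A \<inter> B)"
    using card_Int_Diff[OF assms(1), of B] card_Int_Diff[OF assms(2), of A]
    by (simp_all add: Int_commute)
  ultimately show ?thesis by simp
qed

lemma odd_set_exchange:
  assumes fam: "\<forall>X\<in>\<F>. X \<subseteq> E \<and> even (card X)"
    and ext: "\<forall>S a b. S \<subseteq> E \<and> odd (card S) \<and> a \<in> E - S \<and> b \<in> E - S \<and> a \<noteq> b
                \<longrightarrow> insert a S \<in> \<F> \<or> insert b S \<in> \<F>"
    and "finite E" "S \<subseteq> E" "odd (card S)" "Y \<in> \<F>"
  shows "\<exists>f\<in>symdiff S Y. symdiff S {f} \<in> \<F>"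
proof -
  have Y: "Y \<subseteq> E" "even (card Y)" using fam assms(6) by auto
  have finS: "finite S" and finY: "finite Y"
    using assms(3,4) Y(1) finite_subset by auto
  have odd_diff: "odd (card (symdiff S Y))"
    using card_symdiff[OF finS finY] assms(5) Y(2) by presburger
  consider (shrink) f g where "f \<in> S - Y" "g \<in> S - Y" "f \<noteq> g"
    | (grow) f g where "f \<in> Y - S" "g \<in> Y - S" "f \<noteq> g"
    | (single) f where "symdiff S Y = {f}"
  proof (cases "card (S - Y) \<le> 1 \<and> card (Y - S) \<le> 1")
    case True
    have "card (symdiff S Y) = card (S - Y) + card (Y - S)"
      unfolding symdiff_def using finS finY by (simp add: card_Un_disjoint Diff_Int_distrib2)
    with True odd_diff have "card (symdiff S Y) = 1" by presburger
    then show ?thesis using single card_1_singletonE by metis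
  next
    case False
    then show ?thesis using shrink grow finS finY
      by (metis One_nat_def card_le_Suc0_iff_eq finite_Diff)
  qed
  then show ?thesis
  proof cases
    case (shrink f g)
    let ?S' = "S - {f, g}"
    have "card ?S' = card S - 2" using shrink finS by (simp add: card_Diff_subset)
    moreover have "2 \<le> card S"
      using shrink finS card_mono[of S "{f, g}"] by auto
    ultimately have "odd (card ?S')" using assms(5) by simp
    then have "insert f ?S' \<in> \<F> \<or> insert g ?S' \<in> \<F>"
      using ext assms(4) shrink by blast
    moreover have "insert f ?S' = symdiff S {g}" "insert g ?S' = symdiff S {f}"
      using shrink unfolding symdiff_def by auto
    moreover have "f \<in> symdiff S Y" "g \<in> symdiff S Y"
      using shrink unfolding symdiff_def by auto
    ultimately show ?thesis by metis
  next
    case (grow f g)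
    then have "insert f S \<in> \<F> \<or> insert g S \<in> \<F>"
      using ext assms(4,5) Y(1) by blast
    moreover have "insert f S = symdiff S {f}" "insert g S = symdiff S {g}"
      using grow unfolding symdiff_def by auto
    moreover have "f \<in> symdiff S Y" "g \<in> symdiff S Y"
      using grow unfolding symdiff_def by auto
    ultimately show ?thesis by metis
  next
    case (single f)
    then have "symdiff S {f} = Y" unfolding symdiff_def by blast
    with single assms(6) show ?thesis by blast
  qed
qed

lemma delta_matroid_if_extension_from_odd_sets:
  assumes "finite E" "\<F> \<noteq> {}"
    and fam: "\<forall>X\<in>\<F>. X \<subseteq> E \<and> even (card X)"
    and ext: "\<forall>S a b. S \<subseteq> E \<and> odd (card S) \<and> a \<in> E - S \<and> b \<in> E - S \<and> a \<noteq> b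
                \<longrightarrow> insert a S \<in> \<F> \<or> insert b S \<in> \<F>"
  shows "delta_matroid E \<F>"
  unfolding delta_matroid_def
proof (intro conjI ballI)
  fix X Y e assume X: "X \<in> \<F>" and Y: "Y \<in> \<F>" and e: "e \<in> symdiff X Y"
  let ?S = "symdiff X {e}"
  have "X \<subseteq> E" "Y \<subseteq> E" "even (card X)" using fam X Y by auto
  then have "?S \<subseteq> E" "finite X"
    using e \<open>finite E\<close> finite_subset unfolding symdiff_def by auto
  moreover have "odd (card ?S)"
    using card_symdiff[OF \<open>finite X\<close>, of "{e}"] \<open>even (card X)\<close> by simp presburger
  ultimately obtain f where "f \<in> symdiff ?S Y" "symdiff ?S {f} \<in> \<F>"
    using odd_set_exchange[OF fam ext \<open>finite E\<close> _ _ Y] by blast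
  moreover have "f \<in> symdiff X Y" "symdiff ?S {f} = symdiff X {e, f}"
    using e calculation(1) unfolding symdiff_def by auto
  ultimately show "\<exists>f\<in>symdiff X Y. symdiff X {e, f} \<in> \<F>" by metis
qed (use assms in auto)

theorem lemma4p1:
  fixes n :: nat and \<F> :: "nat set set"
  assumes "n \<ge> 1"
    and "\<forall>X\<in>\<F>. X \<subseteq> {1..n} \<and> even (card X)"
    and "\<forall>r::nat. r \<le> n div 2 \<longrightarrow>
           sparse_paving {1..n} {X\<in>\<F>. card X = 2 * r} \<and> m_rank {X\<in>\<F>. card X = 2 * r} = 2 * r"
  shows "delta_matroid {1..n} \<F>"
proof (rule delta_matroid_if_extension_from_odd_sets[OF _ _ assms(2)])
  have "sparse_paving {1..n} {X\<in>\<F>. card X = 2 * 0}" using assms(3) by blast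
  then show "\<F> \<noteq> {}" unfolding sparse_paving_def paving_def matroid_bases_def by auto
next
  show "\<forall>S a b. S \<subseteq> {1..n} \<and> odd (card S) \<and> a \<in> {1..n} - S \<and> b \<in> {1..n} - S \<and> a \<noteq> b
          \<longrightarrow> insert a S \<in> \<F> \<or> insert b S \<in> \<F>"
  proof (intro allI impI, elim conjE)
    fix S a b assume S: "S \<subseteq> {1..n}" "odd (card S)"
      and ab: "a \<in> {1..n} - S" "b \<in> {1..n} - S" "a \<noteq> b"
    define r where "r = (card S + 1) div 2"
    have "card (insert a S) \<le> n"
      using card_mono[of "{1..n}" "insert a S"] S(1) ab(1) by simp
    then have "r \<le> n div 2" "card S + 1 = 2 * r"
      unfolding r_def using S ab(1) finite_subset[OF S(1)] by (auto, presburger)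
    then show "insert a S \<in> \<F> \<or> insert b S \<in> \<F>"
      using sparse_paving_basis_among_two_extensions[OF _ _ S(1) _ ab] assms(3) by auto
  qed
qed simp

end
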